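(* For $\tau\in\mathbb{R}$ and integer $n\ge0$ let $$\mu_{2n}(\tau;0)=\int_{-\infty}^{\infty}x^{2n}\exp(-x^6+\tau x^4)\,dx.$$ Then \begin{align*} \mu_{2n}(\tau;0)&=\tfrac13\Gamma\!\left(\tfrac13n+\tfrac16\right){}_2F_2\!\left(\tfrac16n+\tfrac1{12},\tfrac16n+\tfrac7{12};\tfrac13,\tfrac23;\tfrac{4\tau^3}{27}\right)+\tfrac13\tau\Gamma\!\left(\tfrac13n+\tfrac56\right){}_2F_2\!\left(\tfrac16n+\tfrac5{12},\tfrac16n+\tfrac{11}{12};\tfrac23,\tfrac43;\tfrac{4\tau^3}{27}\right)\\ &\quad+\tfrac16\tau^2\Gamma\!\left(\tfrac13n+\tfrac32\right){}_2F_2\!\left(\tfrac16n+\tfrac34,\tfrac16n+\tfrac54;\tfrac43,\tfrac53;\tfrac{4\tau^3}{27}\right). \end{align*}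
   Context: ${}_2F_2(a_1,a_2;b_1,b_2;z)$ denotes the generalised hypergeometric function with upper parameters $a_1,a_2$ and lower parameters $b_1,b_2$. *)

theory Defs
  imports "HOL-Analysis.Analysis"
begin

definition hyp2F2 :: "real \<Rightarrow> real \<Rightarrow> real \<Rightarrow> real \<Rightarrow> real \<Rightarrow> real" where
  "hyp2F2 a1 a2 b1 b2 z =
     (\<Sum>k. pochhammer a1 k * pochhammer a2 k / (pochhammer b1 k * pochhammer b2 k)
            * z ^ k / fact k)"

definition mu0 :: "nat \<Rightarrow> real \<Rightarrow> real" where
  "mu0 n \<tau> = (LBINT x. x ^ (2*n) * exp (- (x ^ 6) + \<tau> * x ^ 4))"

end

theory Submission
  imports Defs "HOL-Real_Asymp.Real_Asymp"
begin

text \<open>Expanding exp(tau x^4) into its power series and integrating termwise (the series of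
  absolute values is dominated by the integrable function x^(2n) exp(-x^6 + |tau| x^4)) gives
  mu_2n(tau;0) = sum_k tau^k/k! mu_(2n+4k)(0;0), and the substitution u = x^6 turns the moments
  into mu_2m(0;0) = Gamma((2m+1)/6)/3.  Grouping k = 3j + r by its residue r mod 3, the duplication
  formula for Gamma(s + 2j) and the triplication of (3j+r)! make each subseries a 2F2 series in
  4 tau^3/27.\<close>

lemma has_bochner_integral_Gamma_real:
  fixes s :: real
  assumes "s > 0"
  shows "has_bochner_integral lborel
           (\<lambda>t. indicator {0<..} t *\<^sub>R (t powr (s - 1) / exp t)) (Gamma s)"
proof (rule has_bochner_integral_nn_integral)
  show "(\<integral>\<^sup>+t. ennreal (indicator {0<..} t *\<^sub>R (t powr (s - 1) / exp t)) \<partial>lborel)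
      = ennreal (Gamma s)"
    unfolding Gamma_conv_nn_integral_real[OF assms]
    by (intro nn_integral_cong) (auto simp: indicator_def)
qed (use assms in \<open>auto intro: less_imp_le Gamma_real_pos\<close>)

lemma has_bochner_integral_power_exp_neg_power_half_line:
  fixes m p :: nat
  assumes "p > 0"
  shows "has_bochner_integral lborel (\<lambda>x. indicator {0..} x *\<^sub>R (x ^ m * exp (- (x ^ p))))
           (Gamma ((real m + 1) / p) / p)"
proof -
  define s where "s = (real m + 1) / p"
  define f where "f = (\<lambda>x::real. x ^ m * exp (- (x ^ p)))"
  define g where "g = (\<lambda>u::real. u powr (1 / p))"
  define g' where "g' = (\<lambda>u::real. u powr (1 / p - 1) / p)"
  have s: "s > 0"
    using assms by (simp add: s_def)
  have fg: "f (g u) * g' u = u powr (s - 1) / exp u / p" if "u > 0" for u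
  proof -
    have g_power: "g u ^ m = u powr (real m / p)" "g u ^ p = u"
      using that assms by (simp_all add: g_def powr_realpow[symmetric] powr_powr)
    have "real m / p + (1 / p - 1) = s - 1"
      using assms by (simp add: s_def field_simps)
    then have "u powr (real m / p) * u powr (1 / p - 1) = u powr (s - 1)"
      by (metis powr_add)
    then show ?thesis
      unfolding f_def g'_def g_power by (simp add: exp_minus divide_inverse mult_ac)
  qed
  have Gamma_half_line:
    "has_bochner_integral lborel (\<lambda>u. indicator {0<..} u *\<^sub>R (f (g u) * g' u)) (Gamma s / p)"
  proof -
    have "(\<lambda>u. indicator {0<..} u *\<^sub>R (f (g u) * g' u)) =
        (\<lambda>u. indicator {0<..} u *\<^sub>R (u powr (s - 1) / exp u) / p)"
      by (simp add: fun_eq_iff indicator_def fg)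
    then show ?thesis
      using has_bochner_integral_divide_zero[OF has_bochner_integral_Gamma_real[OF s]] by simp
  qed
  have ein: "einterval 0 \<infinity> = {0::real<..}"
    by (auto simp: einterval_def zero_ereal_def)
  have lim_0: "((ereal \<circ> g \<circ> real_of_ereal) \<longlongrightarrow> 0) (at_right 0)"
    using assms unfolding zero_ereal_def ereal_tendsto_simps g_def by real_asymp
  have lim_infinity: "((ereal \<circ> g \<circ> real_of_ereal) \<longlongrightarrow> \<infinity>) (at_left \<infinity>)"
    using assms unfolding ereal_tendsto_simps g_def by real_asymp
  have deriv: "(g has_real_derivative g' x) (at x)" if "0 < ereal x" for x
    using that has_real_derivative_powr[of x "1 / p"] by (simp add: g_def g'_def)
  have cont_f: "isCont f (g x)" for x
    unfolding f_def by (intro continuous_intros)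
  have cont_g': "isCont g' x" if "0 < ereal x" for x
    using that assms unfolding g'_def by (intro continuous_intros) auto
  have f_g_nonneg: "0 \<le> f (g x)" if "0 < ereal x" for x
    using that by (simp add: f_def g_def)
  have g'_nonneg: "0 \<le> g' x" for x
    by (simp add: g'_def)
  have "set_integrable lborel (einterval 0 \<infinity>) (\<lambda>u. f (g u) * g' u)"
    using Gamma_half_line by (simp add: ein set_integrable_def has_bochner_integral_iff)
  note substitution = interval_integral_substitution_nonneg[of 0 \<infinity> g g' f 0 \<infinity>,
      OF _ deriv cont_f cont_g' f_g_nonneg g'_nonneg lim_0 lim_infinity this]
  have "(LBINT x=0..\<infinity>. f x) = (LBINT u:{0<..}. f (g u) * g' u)"
    using substitution(2) by (simp add: zero_ereal_def interval_integral_to_infinity_eq)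
  also have "\<dots> = Gamma s / p"
    using Gamma_half_line by (simp add: set_lebesgue_integral_def has_bochner_integral_iff)
  finally have "has_bochner_integral lborel (\<lambda>x. indicator {0<..} x *\<^sub>R f x) (Gamma s / p)"
    using substitution(1)
    by (simp add: ein has_bochner_integral_iff set_integrable_def set_lebesgue_integral_def
        zero_ereal_def interval_integral_to_infinity_eq)
  then show ?thesis
    unfolding s_def f_def
    by (rule has_bochner_integral_discrete_difference[where X = "{0}", THEN iffD1, rotated 4])
      (auto simp: indicator_def)
qed

lemma has_bochner_integral_even_power_exp_neg_even_power:
  fixes j q :: nat
  assumes "q > 0"
  shows "has_bochner_integral lborel (\<lambda>x. x ^ (2 * j) * exp (- (x ^ (2 * q))))
           (Gamma ((2 * real j + 1) / (2 * q)) / q)"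
proof -
  have "has_bochner_integral lborel (\<lambda>x. x ^ (2 * j) * exp (- (x ^ (2 * q))))
          (2 *\<^sub>R (Gamma ((real (2 * j) + 1) / real (2 * q)) / real (2 * q)))"
    using assms by (intro has_bochner_integral_even_function
        has_bochner_integral_power_exp_neg_power_half_line) (auto simp: power_mult)
  then show ?thesis
    by simp
qed

lemma sums_integral_dominated:
  fixes f :: "nat \<Rightarrow> 'a \<Rightarrow> 'b::{banach, second_countable_topology}"
  assumes integrable_f[measurable]: "\<And>k. integrable M (f k)"
    and norm_sums: "\<And>x. x \<in> space M \<Longrightarrow> (\<lambda>k. norm (f k x)) sums g x"
    and integrable_g: "integrable M g"
  shows "(\<lambda>k. integral\<^sup>L M (f k)) sums (\<integral>x. (\<Sum>k. f k x) \<partial>M)"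
proof (rule sums_integral)
  show "AE x in M. summable (\<lambda>k. norm (f k x))"
    using norm_sums by (auto intro: sums_summable)
  have "(\<Sum>k. ennreal (\<integral>x. norm (f k x) \<partial>M)) = (\<Sum>k. \<integral>\<^sup>+x. norm (f k x) \<partial>M)"
    by (intro suminf_cong nn_integral_eq_integral[symmetric] integrable_norm integrable_f) auto
  also have "\<dots> = (\<integral>\<^sup>+x. (\<Sum>k. ennreal (norm (f k x))) \<partial>M)"
    by (intro nn_integral_suminf[symmetric]) measurable
  also have "\<dots> = (\<integral>\<^sup>+x. ennreal (g x) \<partial>M)"
    using norm_sums by (intro nn_integral_cong suminf_ennreal_eq) auto
  also have "\<dots> \<le> (\<integral>\<^sup>+x. ennreal (norm (g x)) \<partial>M)"
    by (intro nn_integral_mono) simp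
  also have "\<dots> < \<infinity>"
    using integrable_g by (simp add: integrable_iff_bounded)
  finally show "summable (\<lambda>k. \<integral>x. norm (f k x) \<partial>M)"
    by (intro summable_suminf_not_top) (auto simp: less_top)
qed (rule integrable_f)

lemma
  fixes a :: "nat \<Rightarrow> 'a::banach"
  assumes summable_norm: "summable (\<lambda>k. norm (a k))" and "0 < m"
  shows summable_residue_class: "summable (\<lambda>j. a (m * j + r))"
    and suminf_split_residue_classes: "(\<Sum>k. a k) = (\<Sum>r<m. \<Sum>j. a (m * j + r))"
proof -
  show summable_class: "summable (\<lambda>j. a (m * j + r))" for r
  proof (rule summable_norm_cancel)
    have "inj (\<lambda>j. m * j + r)"
      using \<open>0 < m\<close> by (auto intro: injI)
    then show "summable (\<lambda>j. norm (a (m * j + r)))"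
      using summable_reindex[OF summable_norm] by (simp add: o_def)
  qed
  have "(\<lambda>j. sum a {j * m..<j * m + m}) sums (\<Sum>k. a k)"
    using sums_group[OF summable_sums[OF summable_norm_cancel[OF summable_norm]] \<open>0 < m\<close>] .
  moreover have "sum a {j * m..<j * m + m} = (\<Sum>r<m. a (m * j + r))" for j
    using sum.shift_bounds_nat_ivl[of a 0 "j * m" m]
    by (simp add: lessThan_atLeast0 add.commute mult.commute)
  ultimately have "(\<lambda>j. \<Sum>r<m. a (m * j + r)) sums (\<Sum>k. a k)"
    by simp
  then show "(\<Sum>k. a k) = (\<Sum>r<m. \<Sum>j. a (m * j + r))"
    using suminf_sum[of "{..<m}" "\<lambda>r j. a (m * j + r)"] summable_class
    by (simp add: sums_iff)
qed

lemma suminf_mult_of_summable_mult: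
  fixes f :: "nat \<Rightarrow> 'a::real_normed_field"
  assumes "summable (\<lambda>n. c * f n)"
  shows "(\<Sum>n. c * f n) = c * (\<Sum>n. f n)"
proof (cases "c = 0")
  case False
  then have "summable f"
    using summable_mult[OF assms, of "inverse c"] by (simp add: field_simps)
  then show ?thesis
    by (rule suminf_mult)
qed simp

lemma pochhammer_triple:
  fixes z :: "'a::field_char_0"
  shows "pochhammer z (3 * n) =
    27 ^ n * pochhammer (z / 3) n * pochhammer ((z + 1) / 3) n * pochhammer ((z + 2) / 3) n"
proof (induction n)
  case (Suc n)
  have "pochhammer z (3 * Suc n) = pochhammer z (3 * n) * ((z + of_nat (3 * n)) *
      (z + of_nat (3 * n) + 1) * (z + of_nat (3 * n) + 2))"
    using pochhammer_product'[of z "3 * n" 3] by (simp add: numeral_3_eq_3 pochhammer_rec mult_ac)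
  also have "(z + of_nat (3 * n)) * (z + of_nat (3 * n) + 1) * (z + of_nat (3 * n) + 2) =
      27 * ((z / 3 + of_nat n) * ((z + 1) / 3 + of_nat n) * ((z + 2) / 3 + of_nat n))"
    by (simp add: field_simps)
  finally show ?case
    unfolding Suc.IH by (simp add: pochhammer_rec' mult_ac)
qed simp

lemma fact_triple_add:
  "(fact (3 * j + r) :: 'a::field_char_0) = fact r * 27 ^ j * (pochhammer ((of_nat r + 1) / 3) j
     * pochhammer ((of_nat r + 2) / 3) j * pochhammer ((of_nat r + 3) / 3) j)"
  using pochhammer_product'[of "1::'a" r "3 * j"] pochhammer_triple[of "1 + of_nat r :: 'a" j]
  by (simp add: pochhammer_fact add.commute add.left_commute mult_ac)

lemma Gamma_add_double_nat:
  fixes s :: real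
  assumes "s \<notin> \<int>\<^sub>\<le>\<^sub>0"
  shows "Gamma (s + 2 * real j) = Gamma s * 4 ^ j * pochhammer (s / 2) j * pochhammer (s / 2 + 1 / 2) j"
proof -
  have "pochhammer s (2 * j) = 4 ^ j * pochhammer (s / 2) j * pochhammer (s / 2 + 1 / 2) j"
    using pochhammer_double[of "s / 2" j] by (simp add: power_mult)
  then show ?thesis
    using pochhammer_Gamma[OF assms, of "2 * j"] Gamma_eq_zero_iff[of s] assms
    by (simp add: field_simps)
qed

lemma diff_mult_square_le_cube:
  fixes b y :: real
  assumes "0 \<le> b" "0 \<le> y"
  shows "(b - y) * y\<^sup>2 \<le> b ^ 3"
proof (cases "y \<le> b")
  case True
  then have "(b - y) * y\<^sup>2 \<le> b * b\<^sup>2"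
    using assms by (intro mult_mono power_mono) auto
  then show ?thesis
    by (simp add: power2_eq_square power3_eq_cube)
next
  case False
  then have "(b - y) * y\<^sup>2 \<le> 0"
    by (intro mult_nonpos_nonneg) auto
  then show ?thesis
    using assms by (meson order.trans zero_le_power)
qed

lemma mu0_zero: "mu0 n 0 = Gamma ((2 * real n + 1) / 6) / 3"
  using has_bochner_integral_even_power_exp_neg_even_power[of 3 n]
  by (simp add: mu0_def has_bochner_integral_iff)

lemma integrable_mu0_integrand:
  fixes c :: real
  shows "integrable lborel (\<lambda>x. x ^ (2 * n) * exp (- (x ^ 6) + c * x ^ 4))"
proof (rule Bochner_Integration.integrable_bound)
  define b where "b = \<bar>c\<bar> + 1"
  show "integrable lborel (\<lambda>x. exp (b ^ 3) * (x ^ (2 * n) * exp (- (x ^ (2 * 2)))))"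
    using has_bochner_integral_even_power_exp_neg_even_power[of 2 n]
    by (intro integrable_mult_right) (simp add: has_bochner_integral_iff)
  show "AE x in lborel. norm (x ^ (2 * n) * exp (- (x ^ 6) + c * x ^ 4))
          \<le> norm (exp (b ^ 3) * (x ^ (2 * n) * exp (- (x ^ (2 * 2)))))"
  proof (rule AE_I2)
    fix x :: real
    have "c * x ^ 4 \<le> \<bar>c\<bar> * x ^ 4"
      by (intro mult_right_mono) auto
    then have "c * x ^ 4 - x ^ 6 \<le> (b - x\<^sup>2) * (x\<^sup>2)\<^sup>2 - x ^ 4"
      by (simp add: b_def algebra_simps flip: power_mult)
    also have "\<dots> \<le> b ^ 3 - x ^ 4"
      using diff_mult_square_le_cube[of b "x\<^sup>2"] by (simp add: b_def)
    finally have "exp (- (x ^ 6) + c * x ^ 4) \<le> exp (b ^ 3) * exp (- (x ^ 4))"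
      by (simp flip: exp_add)
    then have "x ^ (2 * n) * exp (- (x ^ 6) + c * x ^ 4)
        \<le> x ^ (2 * n) * (exp (b ^ 3) * exp (- (x ^ 4)))"
      by (intro mult_left_mono) (simp_all add: power_mult)
    then show "norm (x ^ (2 * n) * exp (- (x ^ 6) + c * x ^ 4))
          \<le> norm (exp (b ^ 3) * (x ^ (2 * n) * exp (- (x ^ (2 * 2)))))"
      by (simp add: abs_mult power_mult mult_ac)
  qed
qed measurable

lemma mu0_integrand_sums:
  fixes \<tau> x :: real
  shows "(\<lambda>k. \<tau> ^ k / fact k * (x ^ (2 * (n + 2 * k)) * exp (- (x ^ 6))))
           sums (x ^ (2 * n) * exp (- (x ^ 6) + \<tau> * x ^ 4))"
proof -
  have "(\<lambda>k. x ^ (2 * n) * exp (- (x ^ 6)) * ((\<tau> * x ^ 4) ^ k /\<^sub>R fact k))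
          sums (x ^ (2 * n) * exp (- (x ^ 6)) * exp (\<tau> * x ^ 4))"
    by (intro sums_mult exp_converges)
  then show ?thesis
    unfolding exp_add by (simp add: power_add power_mult_distrib field_simps flip: power_mult)
qed

lemma mu0_sums: "(\<lambda>k. \<tau> ^ k / fact k * mu0 (n + 2 * k) 0) sums mu0 n \<tau>"
proof -
  define f where "f = (\<lambda>k x. \<tau> ^ k / fact k * (x ^ (2 * (n + 2 * k)) * exp (- (x ^ 6))))"
  have "(\<lambda>k. integral\<^sup>L lborel (f k)) sums (LBINT x. (\<Sum>k. f k x))"
  proof (rule sums_integral_dominated)
    show "integrable lborel (f k)" for k
      using integrable_mu0_integrand[where c = 0 and n = "n + 2 * k"]
      unfolding f_def by (intro integrable_mult_right) simp
    show "(\<lambda>k. norm (f k x)) sums (x ^ (2 * n) * exp (- (x ^ 6) + \<bar>\<tau>\<bar> * x ^ 4))" for x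
      using mu0_integrand_sums[of "\<bar>\<tau>\<bar>" x n]
      by (simp add: f_def abs_mult power_abs power_even_abs)
  qed (rule integrable_mu0_integrand)
  moreover have "integral\<^sup>L lborel (f k) = \<tau> ^ k / fact k * mu0 (n + 2 * k) 0" for k
    by (simp add: f_def mu0_def)
  moreover have "(LBINT x. (\<Sum>k. f k x)) = mu0 n \<tau>"
    unfolding mu0_def f_def
    by (intro Bochner_Integration.integral_cong refl sym[OF sums_unique] mu0_integrand_sums)
  ultimately show ?thesis
    by simp
qed

lemma summable_abs_mu0_series: "summable (\<lambda>k. \<bar>\<tau> ^ k / fact k * mu0 (n + 2 * k) 0\<bar>)"
  using sums_summable[OF mu0_sums[of "\<bar>\<tau>\<bar>" n]]
  by (simp add: abs_mult power_abs mu0_zero Gamma_real_pos less_imp_le)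

lemma mu0_residue_class_sum:
  fixes \<tau> s a b c d :: real and n r :: nat
  assumes s: "s = real n / 3 + 1 / 6 + 2 * real r / 3"
    and a: "a = s / 2" and b: "b = a + 1 / 2"
    \<comment> \<open>(3j+r)! = r! 27^j times the three Pochhammer symbols on the right; one of them is
      (1)_j = j!, and the other two are the lower parameters of the 2F2 series\<close>
    and lower: "\<And>j. pochhammer c j * pochhammer d j * fact j = pochhammer ((real r + 1) / 3) j
      * pochhammer ((real r + 2) / 3) j * pochhammer ((real r + 3) / 3) j"
  shows "(\<Sum>j. \<tau> ^ (3 * j + r) / fact (3 * j + r) * mu0 (n + 2 * (3 * j + r)) 0) =
    \<tau> ^ r * Gamma s / (3 * fact r) * hyp2F2 a b c d (4 * \<tau> ^ 3 / 27)"
proof -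
  define C where "C = \<tau> ^ r * Gamma s / (3 * fact r)"
  define T where "T j = pochhammer a j * pochhammer b j / (pochhammer c j * pochhammer d j)
      * (4 * \<tau> ^ 3 / 27) ^ j / fact j" for j
  have coefficient:
    "\<tau> ^ (3 * j + r) / fact (3 * j + r) * mu0 (n + 2 * (3 * j + r)) 0 = C * T j" for j
  proof -
    have "s > 0"
      by (simp add: s add_pos_nonneg)
    then have "s \<notin> \<int>\<^sub>\<le>\<^sub>0"
      using nonpos_Ints_nonpos by fastforce
    then have "Gamma (s + 2 * real j) = Gamma s * 4 ^ j * pochhammer a j * pochhammer b j"
      unfolding b a by (rule Gamma_add_double_nat)
    moreover have "mu0 (n + 2 * (3 * j + r)) 0 = Gamma (s + 2 * real j) / 3"
      by (simp add: mu0_zero s field_simps)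
    ultimately have mu0_eq:
      "mu0 (n + 2 * (3 * j + r)) 0 = Gamma s * 4 ^ j * pochhammer a j * pochhammer b j / 3"
      by simp
    have power_eq: "\<tau> ^ (3 * j + r) = \<tau> ^ r * (\<tau> ^ 3) ^ j"
      by (simp add: power_add power_mult)
    have "pochhammer c j * pochhammer d j * fact j > 0"
      unfolding lower by (intro mult_pos_pos pochhammer_pos) auto
    then show ?thesis
      unfolding C_def T_def fact_triple_add lower[symmetric] mu0_eq power_eq
      by (simp add: power_divide power_mult_distrib field_simps)
  qed
  have "summable (\<lambda>j. \<tau> ^ (3 * j + r) / fact (3 * j + r) * mu0 (n + 2 * (3 * j + r)) 0)"
    using summable_residue_class[OF _ _, of "\<lambda>k. \<tau> ^ k / fact k * mu0 (n + 2 * k) 0" 3 r]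
      summable_abs_mu0_series by simp
  then show ?thesis
    unfolding coefficient hyp2F2_def T_def[symmetric] C_def[symmetric]
    by (rule suminf_mult_of_summable_mult)
qed

theorem lemma6p10:
  fixes \<tau> :: real and n :: nat
  shows "mu0 n \<tau> =
     1/3 * Gamma (real n / 3 + 1/6) *
       hyp2F2 (real n / 6 + 1/12) (real n / 6 + 7/12) (1/3) (2/3) (4 * \<tau> ^ 3 / 27)
   + 1/3 * \<tau> * Gamma (real n / 3 + 5/6) *
       hyp2F2 (real n / 6 + 5/12) (real n / 6 + 11/12) (2/3) (4/3) (4 * \<tau> ^ 3 / 27)
   + 1/6 * \<tau>^2 * Gamma (real n / 3 + 3/2) *
       hyp2F2 (real n / 6 + 3/4) (real n / 6 + 5/4) (4/3) (5/3) (4 * \<tau> ^ 3 / 27)"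
proof -
  define coeff where "coeff k = \<tau> ^ k / fact k * mu0 (n + 2 * k) 0" for k
  have "mu0 n \<tau> = (\<Sum>k. coeff k)"
    using mu0_sums by (simp add: coeff_def sums_iff)
  also have "\<dots> = (\<Sum>r<3. \<Sum>j. coeff (3 * j + r))"
    using summable_abs_mu0_series by (intro suminf_split_residue_classes) (simp_all add: coeff_def)
  also have "\<dots> = (\<Sum>j. coeff (3 * j + 0)) + (\<Sum>j. coeff (3 * j + 1))
      + (\<Sum>j. coeff (3 * j + 2))"
    by (simp add: numeral_3_eq_3)
  also have "(\<Sum>j. coeff (3 * j + 0)) = 1/3 * Gamma (real n / 3 + 1/6) *
       hyp2F2 (real n / 6 + 1/12) (real n / 6 + 7/12) (1/3) (2/3) (4 * \<tau> ^ 3 / 27)"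
    unfolding coeff_def
    by (subst mu0_residue_class_sum[where s = "real n / 3 + 1/6" and a = "real n / 6 + 1/12"
          and b = "real n / 6 + 7/12" and c = "1/3" and d = "2/3"])
      (simp_all add: mult_ac flip: pochhammer_fact)
  also have "(\<Sum>j. coeff (3 * j + 1)) = 1/3 * \<tau> * Gamma (real n / 3 + 5/6) *
       hyp2F2 (real n / 6 + 5/12) (real n / 6 + 11/12) (2/3) (4/3) (4 * \<tau> ^ 3 / 27)"
    unfolding coeff_def
    by (subst mu0_residue_class_sum[where s = "real n / 3 + 5/6" and a = "real n / 6 + 5/12"
          and b = "real n / 6 + 11/12" and c = "2/3" and d = "4/3"])
      (simp_all add: mult_ac flip: pochhammer_fact)
  also have "(\<Sum>j. coeff (3 * j + 2)) = 1/6 * \<tau>^2 * Gamma (real n / 3 + 3/2) *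
       hyp2F2 (real n / 6 + 3/4) (real n / 6 + 5/4) (4/3) (5/3) (4 * \<tau> ^ 3 / 27)"
    unfolding coeff_def
    by (subst mu0_residue_class_sum[where s = "real n / 3 + 3/2" and a = "real n / 6 + 3/4"
          and b = "real n / 6 + 5/4" and c = "4/3" and d = "5/3"])
      (simp_all add: mult_ac flip: pochhammer_fact)
  finally show ?thesis .
qed

end
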